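(* Let $\mu\in\mathbb{C}$ and let $\{S_n(z)\}_{n\ge -1}$ be a sequence of rational functions in $z$ satisfying $S_{-1}=S_0=1$ and the recurrence $$S_{n+1}S_{n-1}=-z\left[S_n\frac{d^2S_n}{dz^2}-\left(\frac{dS_n}{dz}\right)^2\right]-S_n\frac{dS_n}{dz}+(z+\mu)S_n^2,\qquad n\ge 0,$$ and suppose that the nonzero roots of each $S_n$ are simple. Then for every $N\in\mathbb{N}\cup\{0\}$, if $z=0$ is not a root of any $S_n(z)$ with $0\le n\le N$, the following hold: (a) $S_{N+1}(z)$ is a polynomial of degree $\tfrac12(N+1)(N+2)$; (b) $S_{N+1}(z)$ and $S_N(z)$ have no common root.
   Context: The functions $S_n(z)=S_n(z;\mu)$ (Umemura polynomials associated with the third Painlevé equation) are defined by the recurrence in the claim, each $S_{n+1}$ being a priori the rational function obtained by dividing the right-hand side by $S_{n-1}$. *)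

theory Defs
  imports "HOL-Computational_Algebra.Computational_Algebra" "HOL-Computational_Algebra.Field_as_Ring"
begin

text \<open>Each is written in lowest terms
(numerator and denominator coprime, monic denominator) via quot_of_fract.\<close>

type_synonym ratfun = "complex poly fract"

definition rnum :: "ratfun \<Rightarrow> complex poly" where
  "rnum f = fst (quot_of_fract f)"

definition rden :: "ratfun \<Rightarrow> complex poly" where
  "rden f = snd (quot_of_fract f)"

definition rderiv :: "ratfun \<Rightarrow> ratfun" where
  "rderiv f = Fract (pderiv (rnum f) * rden f - rnum f * pderiv (rden f)) (rden f * rden f)"

definition rZ :: ratfun where
  "rZ = to_fract [:0, 1:]"

definition rconst :: "complex \<Rightarrow> ratfun" where
  "rconst c = to_fract [:c:]"

definition is_root :: "ratfun \<Rightarrow> complex \<Rightarrow> bool" where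
  "is_root f z \<longleftrightarrow> poly (rnum f) z = 0"

definition is_polynomial :: "ratfun \<Rightarrow> bool" where
  "is_polynomial f \<longleftrightarrow> rden f = 1"

end

theory Submission
  imports Defs
begin

text \<open>
  With L_k = S_k' / S_k and h_k = S_{k+1} S_{k-1} / S_k^2 the recurrence becomes the
  Toda-type system h_k = z + \<mu> - L_k - z L_k', h_k' = h_k (L_{k+1} + L_{k-1} - 2 L_k).
  Along it the identities (L_{k+1} - L_{k-1}) h_k = 2k + 1 and
  L_{k+1}' + L_k' + (L_{k+1} - L_k)^2 = 0 propagate by induction; the first one is the
  Wronskian identity S_{k+1}' S_{k-1} - S_{k+1} S_{k-1}' = (2k + 1) S_k^2.
  If S_{k-1} and S_k are polynomials, then S_{k+1} S_{k-1} is a polynomial of degree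
  2 deg S_k + 1, so a pole of S_{k+1} sits at a simple root of S_{k-1}, where the Wronskian
  would have a pole; hence S_{k+1} is a polynomial and its degree follows by counting.
  At a common root z of S_{N+1} and S_N the right-hand side of the recurrence equals
  z S_N'(z)^2, so z, being nonzero, would be a multiple root of S_N.
\<close>

section \<open>The derivation on rational functions\<close>

lemma rderiv_Fract:
  assumes q: "q \<noteq> 0"
  shows "rderiv (Fract p q) = Fract (pderiv p * q - p * pderiv q) (q * q)"
proof -
  obtain a b where ab: "quot_of_fract (Fract p q) = (a, b)"
    by (cases "quot_of_fract (Fract p q)") auto
  have b: "b \<noteq> 0" using snd_quot_of_fract_nonzero[of "Fract p q"] ab by simp
  have "Fract a b = Fract p q" using Fract_quot_of_fract[of "Fract p q"] ab by simp
  hence e: "a * q = p * b" by (simp add: eq_fract b q)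
  hence "pderiv (a * q) = pderiv (p * b)" by simp
  hence e': "pderiv a * q + a * pderiv q = pderiv p * b + p * pderiv b"
    by (simp add: pderiv_mult algebra_simps)
  have "(pderiv a * b - a * pderiv b) * (q * q) - (pderiv p * q - p * pderiv q) * (b * b)
     = b * q * (pderiv a * q + a * pderiv q - (pderiv p * b + p * pderiv b))
       - (pderiv b * q + b * pderiv q) * (a * q - p * b)"
    by (simp add: algebra_simps)
  hence "(pderiv a * b - a * pderiv b) * (q * q) = (pderiv p * q - p * pderiv q) * (b * b)"
    using e e' by simp
  thus ?thesis by (simp add: rderiv_def rnum_def rden_def ab eq_fract b q)
qed

lemma rderiv_to_fract: "rderiv (to_fract p) = to_fract (pderiv p)"
  by (simp add: to_fract_def rderiv_Fract)

lemma rderiv_add: "rderiv (x + y) = rderiv x + rderiv y"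
proof (cases x; cases y)
  fix a b c d :: "complex poly"
  assume x: "x = Fract a b" "b \<noteq> 0" and y: "y = Fract c d" "d \<noteq> 0"
  have num: "pderiv (a * d + c * b) * (b * d) - (a * d + c * b) * pderiv (b * d)
     = (pderiv a * b - a * pderiv b) * (d * d) + (pderiv c * d - c * pderiv d) * (b * b)"
    by (simp add: pderiv_add pderiv_mult algebra_simps)
  have den: "b * d * (b * d) = b * b * (d * d)" by (simp add: algebra_simps)
  show ?thesis using x y by (simp add: rderiv_Fract num den)
qed

lemma rderiv_mult: "rderiv (x * y) = rderiv x * y + x * rderiv y"
proof (cases x; cases y)
  fix a b c d :: "complex poly"
  assume x: "x = Fract a b" "b \<noteq> 0" and y: "y = Fract c d" "d \<noteq> 0"
  define n where "n = pderiv (a * c) * (b * d) - a * c * pderiv (b * d)"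
  have num: "(pderiv a * b - a * pderiv b) * c * (b * (d * d))
      + a * (pderiv c * d - c * pderiv d) * (b * b * d) = (b * d) * n"
    by (simp add: n_def pderiv_add pderiv_mult algebra_simps)
  have den: "b * b * d * (b * (d * d)) = (b * d) * (b * d * (b * d))"
    by (simp add: algebra_simps)
  have "rderiv x * y + x * rderiv y = Fract ((pderiv a * b - a * pderiv b) * c) (b * b * d)
       + Fract (a * (pderiv c * d - c * pderiv d)) (b * (d * d))"
    using x y by (simp add: rderiv_Fract)
  also have "\<dots> = Fract ((b * d) * n) ((b * d) * (b * d * (b * d)))"
    using x y by (simp add: num [symmetric] den [symmetric])
  also have "\<dots> = Fract n (b * d * (b * d))"
    using x y by (simp add: mult_fract_cancel)
  finally show ?thesis using x y by (simp add: rderiv_Fract n_def)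
qed

lemma to_fract_of_int: "to_fract (of_int n) = of_int n"
  by (induction n rule: int_induct[where k = 0]) simp_all

lemma rderiv_of_int [simp]: "rderiv (of_int n) = 0"
proof -
  have "pderiv (of_int n :: complex poly) = 0"
    by (simp add: of_int_poly pderiv_pCons)
  thus ?thesis using rderiv_to_fract[of "of_int n"] by (simp add: to_fract_of_int)
qed

lemma rderiv_0 [simp]: "rderiv 0 = 0" and rderiv_1 [simp]: "rderiv 1 = 0"
  using rderiv_of_int[of 0] rderiv_of_int[of 1] by simp_all

lemma rderiv_minus: "rderiv (- x) = - rderiv x"
  using rderiv_add[of x "- x"] by (simp add: add_eq_0_iff)

lemma rderiv_diff: "rderiv (x - y) = rderiv x - rderiv y"
  using rderiv_add[of x "- y"] by (simp add: rderiv_minus)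

lemma rderiv_rZ [simp]: "rderiv rZ = 1"
  by (simp add: rZ_def rderiv_to_fract pderiv_pCons pCons_one)

lemma rderiv_rconst [simp]: "rderiv (rconst c) = 0"
  by (simp add: rconst_def rderiv_to_fract pderiv_pCons)

lemma rderiv_divide:
  assumes "y \<noteq> 0"
  shows "rderiv (x / y) = (rderiv x * y - x * rderiv y) / y\<^sup>2"
proof -
  have "rderiv (x / y) * y + x / y * rderiv y = rderiv x"
    using rderiv_mult[of "x / y" y] assms by simp
  thus ?thesis using assms by (simp add: field_simps power2_eq_square)
qed

section \<open>The recurrence in terms of logarithmic derivatives\<close>

definition rlogderiv :: "ratfun \<Rightarrow> ratfun" where
  "rlogderiv f = rderiv f / f"

definition umemura_rhs :: "complex \<Rightarrow> ratfun \<Rightarrow> ratfun" where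
  "umemura_rhs \<mu> s = - rZ * (s * rderiv (rderiv s) - (rderiv s)\<^sup>2) - s * rderiv s
     + (rZ + rconst \<mu>) * s\<^sup>2"

lemma umemura_rhs_eq_rlogderiv:
  assumes "s \<noteq> 0"
  shows "umemura_rhs \<mu> s
    = s\<^sup>2 * (rZ + rconst \<mu> - rlogderiv s - rZ * rderiv (rlogderiv s))"
  using assms
  by (simp add: umemura_rhs_def rlogderiv_def rderiv_divide field_simps power2_eq_square)

lemma rlogderiv_mult_divide_square:
  assumes "a \<noteq> 0" "b \<noteq> 0" "s \<noteq> 0"
  shows "rlogderiv (a * b / s\<^sup>2) = rlogderiv a + rlogderiv b - 2 * rlogderiv s"
  using assms
  by (simp add: rlogderiv_def rderiv_divide rderiv_mult power2_eq_square field_simps)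

lemma toda_wronskian_step:
  fixes Lm L0 L1 L2 g h :: ratfun and c :: int
  assumes g: "g = rZ + rconst \<mu> - L0 - rZ * rderiv L0"
    and h: "h = rZ + rconst \<mu> - L1 - rZ * rderiv L1"
    and dg: "rderiv g = g * (L1 + Lm - 2 * L0)"
    and dh: "rderiv h = h * (L2 + L0 - 2 * L1)"
    and wronskian: "(L1 - Lm) * g = of_int c"
    and riccati: "rderiv L1 + rderiv L0 + (L1 - L0)\<^sup>2 = 0"
  shows "(L2 - L0) * h = of_int (c + 2)"
proof -
  define Y where "Y = L1 - L0"
  have dY: "rderiv Y = rderiv L1 - rderiv L0"
    by (simp add: Y_def rderiv_diff)
  have ddY: "rderiv (rderiv Y) = rderiv (rderiv L1) - rderiv (rderiv L0)"
    by (simp add: dY rderiv_diff)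
  have riccati': "rderiv (rderiv L1) + rderiv (rderiv L0) + 2 * Y * rderiv Y = 0"
  proof -
    have "rderiv (rderiv L1 + rderiv L0 + Y * Y) = 0"
      using riccati by (simp add: Y_def power2_eq_square)
    thus ?thesis by (simp add: rderiv_add rderiv_mult algebra_simps)
  qed
  have h_eq: "h = g - Y - rZ * rderiv Y"
    using g h dY unfolding Y_def by algebra
  have dh_eq: "rderiv h = rderiv g - 2 * rderiv Y - rZ * rderiv (rderiv Y)"
    by (subst h_eq) (simp add: rderiv_diff rderiv_mult)
  have dg_eq: "rderiv g = 1 - 2 * rderiv L0 - rZ * rderiv (rderiv L0)"
    by (subst g) (simp add: rderiv_diff rderiv_add rderiv_mult)
  have "(L2 - L0) * h = rderiv h + 2 * Y * h"
    using dh unfolding Y_def by algebra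
  also have "\<dots> = of_int c + 2"
    using dg wronskian riccati riccati' h_eq dh_eq dg_eq ddY dY unfolding Y_def by algebra
  finally show ?thesis by simp
qed

text \<open>
  Differentiate the constant (L2 - L0) h and use
  (L2 - L0) (L2 + L0 - 2 L1) = (L2 - L1)^2 - (L1 - L0)^2.
\<close>

lemma toda_riccati_step:
  fixes L0 L1 L2 h :: ratfun and c :: int
  assumes h0: "h \<noteq> 0"
    and dh: "rderiv h = h * (L2 + L0 - 2 * L1)"
    and wronskian: "(L2 - L0) * h = of_int c"
    and riccati: "rderiv L1 + rderiv L0 + (L1 - L0)\<^sup>2 = 0"
  shows "rderiv L2 + rderiv L1 + (L2 - L1)\<^sup>2 = 0"
proof -
  have "rderiv ((L2 - L0) * h) = 0"
    using wronskian by simp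
  hence "h * (rderiv L2 - rderiv L0 + (L2 - L0) * (L2 + L0 - 2 * L1)) = 0"
    using dh by (simp add: rderiv_mult rderiv_diff algebra_simps)
  hence "rderiv L2 - rderiv L0 + (L2 - L0) * (L2 + L0 - 2 * L1) = 0"
    using h0 by simp
  thus ?thesis using riccati by algebra
qed

section \<open>Polynomial solutions\<close>

definition umemura_rhs_poly :: "complex \<Rightarrow> complex poly \<Rightarrow> complex poly" where
  "umemura_rhs_poly \<mu> B = - [:0, 1:] * (B * pderiv (pderiv B) - (pderiv B)\<^sup>2) - B * pderiv B
     + [:\<mu>, 1:] * B\<^sup>2"

lemma umemura_rhs_to_fract:
  "umemura_rhs \<mu> (to_fract B) = to_fract (umemura_rhs_poly \<mu> B)"
proof -
  have lin: "rZ + rconst \<mu> = to_fract [:\<mu>, 1:]"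
    by (simp add: rZ_def rconst_def flip: to_fract_add)
  show ?thesis
    unfolding umemura_rhs_def lin
    by (simp only: umemura_rhs_poly_def rZ_def rderiv_to_fract power2_eq_square
        to_fract_mult to_fract_diff to_fract_uminus to_fract_add)
qed

lemma degree_umemura_rhs_poly:
  assumes "B \<noteq> 0"
  shows "degree (umemura_rhs_poly \<mu> B) = 2 * degree B + 1"
proof -
  define d where "d = degree B"
  define X where "X = [:\<mu>, 1:] * B\<^sup>2"
  define Y where "Y = - [:0, 1:] * (B * pderiv (pderiv B) - (pderiv B)\<^sup>2) - B * pderiv B"
  have "degree X = degree [:\<mu>, 1:] + degree (B\<^sup>2)"
    unfolding X_def by (rule degree_mult_eq) (use assms in auto)
  hence "degree X = 2 * d + 1"
    using assms by (simp add: degree_power_eq d_def)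
  moreover have "degree Y < 2 * d + 1"
  proof (cases "d = 0")
    case True
    then obtain c where "B = [:c:]" by (metis d_def degree_eq_zeroE)
    thus ?thesis by (simp add: Y_def pderiv_pCons)
  next
    case False
    have "degree (B * pderiv (pderiv B)) \<le> 2 * d - 1"
      using degree_mult_le[of B "pderiv (pderiv B)"] by (simp add: degree_pderiv d_def)
    moreover have "degree ((pderiv B)\<^sup>2) \<le> 2 * d - 1"
      using degree_mult_le[of "pderiv B" "pderiv B"]
      by (simp add: degree_pderiv d_def power2_eq_square)
    ultimately have "degree (B * pderiv (pderiv B) - (pderiv B)\<^sup>2) \<le> 2 * d - 1"
      using degree_diff_le by blast
    hence "degree (- [:0, 1:] * (B * pderiv (pderiv B) - (pderiv B)\<^sup>2)) \<le> 2 * d"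
      using degree_mult_le[of "- [:0, 1:]" "B * pderiv (pderiv B) - (pderiv B)\<^sup>2"] False
      by simp
    moreover have "degree (B * pderiv B) \<le> 2 * d"
      using degree_mult_le[of B "pderiv B"] by (simp add: degree_pderiv d_def)
    ultimately have "degree Y \<le> 2 * d"
      unfolding Y_def using degree_diff_le by blast
    thus ?thesis by simp
  qed
  moreover have "umemura_rhs_poly \<mu> B = Y + X"
    by (simp add: umemura_rhs_poly_def X_def Y_def)
  ultimately show ?thesis by (simp add: degree_add_eq_right d_def)
qed

lemma poly_umemura_rhs_poly_at_root:
  assumes "poly B z = 0"
  shows "poly (umemura_rhs_poly \<mu> B) z = z * (poly (pderiv B) z)\<^sup>2"
  using assms by (simp add: umemura_rhs_poly_def)

lemma rsquarefree_iff_simple_roots: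
  assumes "p \<noteq> 0"
  shows "rsquarefree p \<longleftrightarrow> (\<forall>z. poly p z = 0 \<longrightarrow> order z p = 1)"
  using assms rsquarefree_root_order by (auto simp: rsquarefree_def order_root)

lemma complex_poly_has_root_if_not_unit:
  fixes Q :: "complex poly"
  assumes "normalize Q = Q" "Q \<noteq> 1"
  obtains z where "poly Q z = 0"
proof (cases "Q = 0")
  case False
  have "\<not> is_unit Q"
    using assms is_unit_normalize by metis
  hence "degree Q \<noteq> 0"
    using False is_unit_iff_degree by blast
  thus ?thesis using that alg_closed_imp_poly_has_root by blast
qed (use that in simp)

text \<open>
  At a pole z of c = P/Q, which must be a simple root of A, the Wronskian c' A - c A' has a
  pole with residue -2 P(z) A'(z) / Q'(z) \<noteq> 0.
\<close>

lemma rden_eq_1_if_wronskian_polynomial: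
  fixes A E F :: "complex poly" and c :: ratfun
  assumes A: "rsquarefree A"
    and mult: "c * to_fract A = to_fract E"
    and wronskian: "rderiv c * to_fract A - c * to_fract (pderiv A) = to_fract F"
  shows "rden c = 1"
proof -
  define D where "D = pderiv A"
  obtain P Q where PQ: "quot_of_fract c = (P, Q)"
    by (cases "quot_of_fract c") auto
  have Q0: "Q \<noteq> 0" using snd_quot_of_fract_nonzero[of c] PQ by simp
  have c: "c = Fract P Q" using Fract_quot_of_fract[of c] PQ by simp
  have coprime: "coprime P Q" using coprime_quot_of_fract[of c] PQ by simp
  have "P * A = E * Q" using mult Q0 by (simp add: c to_fract_def eq_fract)
  hence "Q dvd A"
    using coprime by (metis coprime_commute coprime_dvd_mult_right_iff dvd_triv_right)
  then obtain M where AM: "A = Q * M" by blast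
  have "(pderiv P * Q - P * pderiv Q) * A * Q - P * D * (Q * Q) = F * (Q * Q * Q)"
    using wronskian Q0
    by (simp add: c to_fract_def rderiv_Fract eq_fract algebra_simps flip: D_def)
  hence "(Q * Q) * ((pderiv P * Q - P * pderiv Q) * M - P * D) = (Q * Q) * (F * Q)"
    unfolding AM by (simp add: algebra_simps)
  hence eq: "(pderiv P * Q - P * pderiv Q) * M - P * D = F * Q"
    using Q0 by simp
  have "Q = 1"
  proof (rule ccontr)
    assume "Q \<noteq> 1"
    then obtain z where Qz: "poly Q z = 0"
      using complex_poly_has_root_if_not_unit normalize_snd_quot_of_fract[of c] PQ by fastforce
    have "poly P z \<noteq> 0" using coprime_poly_0[OF coprime] Qz by blast
    moreover have "poly D z \<noteq> 0"
    proof -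
      have "poly A z = 0" using Qz AM by simp
      thus ?thesis using A unfolding D_def rsquarefree_roots by blast
    qed
    moreover have "poly D z = poly (pderiv Q) z * poly M z"
      using Qz AM by (simp add: D_def pderiv_mult)
    moreover have "poly ((pderiv P * Q - P * pderiv Q) * M - P * D) z = 0"
      using Qz by (simp add: eq)
    ultimately show False using Qz by simp
  qed
  thus ?thesis by (simp add: rden_def PQ)
qed

lemma to_fract_rnum_if_is_polynomial:
  assumes "is_polynomial f"
  shows "to_fract (rnum f) = f"
  using assms by (simp add: is_polynomial_def rnum_def rden_def to_fract_quot_of_fract)

section \<open>Sequences satisfying the recurrence\<close>

locale umemura_sequence =
  fixes \<mu> :: complex and S :: "int \<Rightarrow> ratfun"
  assumes S_minus_1: "S (-1) = 1" and S_0: "S 0 = 1"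
    and recurrence: "\<And>n. 0 \<le> n \<Longrightarrow> S (n + 1) * S (n - 1) = umemura_rhs \<mu> (S n)"
begin

abbreviation L :: "int \<Rightarrow> ratfun" where
  "L k \<equiv> rlogderiv (S k)"

definition ratio :: "int \<Rightarrow> ratfun" where
  "ratio k = S (k + 1) * S (k - 1) / (S k)\<^sup>2"

lemma ratio_eq:
  assumes "0 \<le> k" "S k \<noteq> 0"
  shows "ratio k = rZ + rconst \<mu> - L k - rZ * rderiv (L k)"
  using umemura_rhs_eq_rlogderiv[OF assms(2)] recurrence[OF assms(1)] assms(2)
  by (simp add: ratio_def)

lemma ratio_nonzero:
  assumes "S (k - 1) \<noteq> 0" "S k \<noteq> 0" "S (k + 1) \<noteq> 0"
  shows "ratio k \<noteq> 0"
  using assms by (simp add: ratio_def)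

lemma rderiv_ratio:
  assumes "S (k - 1) \<noteq> 0" "S k \<noteq> 0" "S (k + 1) \<noteq> 0"
  shows "rderiv (ratio k) = ratio k * (L (k + 1) + L (k - 1) - 2 * L k)"
proof -
  have "rlogderiv (ratio k) = L (k + 1) + L (k - 1) - 2 * L k"
    unfolding ratio_def using assms by (simp add: rlogderiv_mult_divide_square)
  thus ?thesis
    using ratio_nonzero[OF assms] by (simp add: rlogderiv_def field_simps)
qed

lemma S_1: "S 1 = rZ + rconst \<mu>"
  using recurrence[of 0] by (simp add: S_minus_1 S_0 umemura_rhs_def)

lemma toda_invariants:
  fixes k :: nat
  assumes "\<And>j. -1 \<le> j \<Longrightarrow> j \<le> int k + 1 \<Longrightarrow> S j \<noteq> 0"
  shows "(L (int k + 1) - L (int k - 1)) * ratio k = of_int (2 * k + 1)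
    \<and> rderiv (L (int k + 1)) + rderiv (L k) + (L (int k + 1) - L k)\<^sup>2 = 0"
  using assms
proof (induction k)
  case 0
  define w where "w = rZ + rconst \<mu>"
  have w0: "w \<noteq> 0"
    using S_1 "0.prems"[of 1] by (simp add: w_def)
  have dw: "rderiv w = 1"
    by (simp add: w_def rderiv_add)
  have "L 1 = 1 / w"
    by (simp add: rlogderiv_def S_1 w_def [symmetric] dw)
  moreover have "rderiv (1 / w) = - 1 / w\<^sup>2"
    using w0 by (simp add: rderiv_divide dw)
  ultimately show ?case
    using w0 by (simp add: rlogderiv_def ratio_def S_minus_1 S_0 S_1 w_def [symmetric]
        field_simps power2_eq_square)
next
  case (Suc k)
  define n where "n = int k"
  have nz: "S j \<noteq> 0" if "-1 \<le> j" "j \<le> n + 2" for j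
    using Suc.prems that by (simp add: n_def)
  have IH: "(L (n + 1) - L (n - 1)) * ratio n = of_int (2 * n + 1)"
    "rderiv (L (n + 1)) + rderiv (L n) + (L (n + 1) - L n)\<^sup>2 = 0"
    using Suc.IH nz by (simp_all add: n_def)
  have dratio: "rderiv (ratio (n + 1)) = ratio (n + 1) * (L (n + 2) + L n - 2 * L (n + 1))"
    using rderiv_ratio[of "n + 1"] nz[of n] nz[of "n + 1"] nz[of "n + 2"]
    by (simp add: n_def add.assoc)
  have wronskian: "(L (n + 2) - L n) * ratio (n + 1) = of_int (2 * n + 1 + 2)"
  proof (rule toda_wronskian_step)
    show "ratio n = rZ + rconst \<mu> - L n - rZ * rderiv (L n)"
      using ratio_eq[of n] nz by (simp add: n_def)
    show "ratio (n + 1) = rZ + rconst \<mu> - L (n + 1) - rZ * rderiv (L (n + 1))"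
      using ratio_eq[of "n + 1"] nz by (simp add: n_def)
    show "rderiv (ratio n) = ratio n * (L (n + 1) + L (n - 1) - 2 * L n)"
      using rderiv_ratio[of n] nz by (simp add: n_def)
  qed (use IH dratio in simp_all)
  moreover have "ratio (n + 1) \<noteq> 0"
    using ratio_nonzero[of "n + 1"] nz[of n] nz[of "n + 1"] nz[of "n + 2"]
    by (simp add: n_def add.assoc)
  hence "rderiv (L (n + 2)) + rderiv (L (n + 1)) + (L (n + 2) - L (n + 1))\<^sup>2 = 0"
    using toda_riccati_step[OF _ dratio wronskian IH(2)] by simp
  ultimately show ?case
    by (simp add: n_def add.assoc algebra_simps)
qed

lemma wronskian_S:
  fixes k :: nat
  assumes "\<And>j. -1 \<le> j \<Longrightarrow> j \<le> int k + 1 \<Longrightarrow> S j \<noteq> 0"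
  shows "rderiv (S (int k + 1)) * S (int k - 1) - S (int k + 1) * rderiv (S (int k - 1))
    = of_int (2 * k + 1) * (S k)\<^sup>2"
proof -
  have nz: "S (int k - 1) \<noteq> 0" "S k \<noteq> 0" "S (int k + 1) \<noteq> 0"
    using assms by auto
  have "rderiv (S (int k + 1)) * S (int k - 1) - S (int k + 1) * rderiv (S (int k - 1))
      = (L (int k + 1) - L (int k - 1)) * (S (int k + 1) * S (int k - 1))"
    using nz by (simp add: rlogderiv_def field_simps)
  also have "\<dots> = (L (int k + 1) - L (int k - 1)) * ratio k * (S k)\<^sup>2"
    using nz by (simp add: ratio_def)
  finally show ?thesis
    using toda_invariants[of k, OF assms] by simp
qed

definition umemura_polynomial :: "int \<Rightarrow> bool" where
  "umemura_polynomial j \<longleftrightarrow>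
     is_polynomial (S j) \<and> S j \<noteq> 0 \<and> 2 * int (degree (rnum (S j))) = j * (j + 1)"

lemma umemura_polynomial_step:
  fixes k :: nat
  assumes prev: "\<And>j. -1 \<le> j \<Longrightarrow> j \<le> int k \<Longrightarrow> umemura_polynomial j"
    and squarefree: "rsquarefree (rnum (S (int k - 1)))"
  shows "umemura_polynomial (int k + 1)"
proof -
  define A where "A = rnum (S (int k - 1))"
  define B where "B = rnum (S k)"
  have SA: "S (int k - 1) = to_fract A" and SB: "S k = to_fract B"
    using prev[of "int k - 1"] prev[of k]
    by (simp_all add: A_def B_def umemura_polynomial_def to_fract_rnum_if_is_polynomial)
  have A0: "A \<noteq> 0" and B0: "B \<noteq> 0"
    using prev[of "int k - 1"] prev[of k] SA SB by (auto simp: umemura_polynomial_def)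
  have mult: "S (int k + 1) * to_fract A = to_fract (umemura_rhs_poly \<mu> B)"
    using recurrence[of k] SA SB by (simp add: umemura_rhs_to_fract)
  have rhs_degree: "degree (umemura_rhs_poly \<mu> B) = 2 * degree B + 1"
    using degree_umemura_rhs_poly[OF B0] .
  hence nz: "S (int k + 1) \<noteq> 0"
    using mult by auto
  have "rderiv (S (int k + 1)) * to_fract A - S (int k + 1) * to_fract (pderiv A)
      = to_fract (of_int (2 * k + 1) * B\<^sup>2)"
  proof -
    have nonzero: "S j \<noteq> 0" if "-1 \<le> j" "j \<le> int k + 1" for j
      using prev[of j] nz that by (cases "j = int k + 1") (auto simp: umemura_polynomial_def)
    have square: "to_fract (of_int c * B\<^sup>2) = of_int c * (S k)\<^sup>2" for c
      by (simp add: SB to_fract_of_int power2_eq_square)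
    show ?thesis
      using wronskian_S[of k, OF nonzero] by (simp only: SA rderiv_to_fract square)
  qed
  hence "rden (S (int k + 1)) = 1"
    using rden_eq_1_if_wronskian_polynomial[OF squarefree[folded A_def] mult] by blast
  hence poly: "is_polynomial (S (int k + 1))"
    by (simp add: is_polynomial_def)
  define P where "P = rnum (S (int k + 1))"
  have "to_fract (P * A) = to_fract (umemura_rhs_poly \<mu> B)"
    using mult to_fract_rnum_if_is_polynomial[OF poly] by (simp add: P_def)
  hence "P * A = umemura_rhs_poly \<mu> B"
    by (simp only: to_fract_eq_iff)
  moreover have "P \<noteq> 0"
    using nz to_fract_rnum_if_is_polynomial[OF poly] by (auto simp: P_def)
  ultimately have "degree P + degree A = 2 * degree B + 1"
    using rhs_degree A0 by (metis degree_mult_eq)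
  hence "int (degree P) + int (degree A) = 2 * int (degree B) + 1"
    by linarith
  moreover have "2 * int (degree A) = (int k - 1) * int k"
    and "2 * int (degree B) = int k * (int k + 1)"
    using prev[of "int k - 1"] prev[of k] by (simp_all add: umemura_polynomial_def A_def B_def)
  ultimately have "2 * int (degree P) = (int k + 1) * (int k + 2)"
    by algebra
  thus ?thesis
    using poly nz by (simp add: umemura_polynomial_def P_def algebra_simps)
qed

lemma umemura_polynomial_upto:
  assumes simple_roots: "\<And>j z. 0 \<le> j \<Longrightarrow> j \<le> int n \<Longrightarrow> poly (rnum (S j)) z = 0
      \<Longrightarrow> order z (rnum (S j)) = 1"
    and "-1 \<le> j" "j \<le> int n + 1"
  shows "umemura_polynomial j"
proof -
  have "umemura_polynomial j" if "k \<le> n + 1" "-1 \<le> j" "j \<le> int k" for k j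
    using that
  proof (induction k arbitrary: j)
    case 0
    hence "j = -1 \<or> j = 0" by auto
    thus ?case
      by (auto simp: umemura_polynomial_def is_polynomial_def rden_def rnum_def S_minus_1 S_0)
  next
    case (Suc k)
    have prev: "umemura_polynomial i" if "-1 \<le> i" "i \<le> int k" for i
      using Suc.IH Suc.prems(1) that by simp
    have "rsquarefree (rnum (S (int k - 1)))"
    proof (cases "k = 0")
      case True
      thus ?thesis by (simp add: S_minus_1 rnum_def rsquarefree_def order_0I)
    next
      case False
      hence "rnum (S (int k - 1)) \<noteq> 0"
        using prev[of "int k - 1"] by (auto simp: umemura_polynomial_def rnum_def)
      thus ?thesis
        using simple_roots[of "int k - 1"] Suc.prems(1) False
        by (simp add: rsquarefree_iff_simple_roots)
    qed
    hence "umemura_polynomial (int k + 1)"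
      using umemura_polynomial_step prev by blast
    thus ?case
      using prev Suc.prems by (cases "j = int k + 1") auto
  qed
  thus ?thesis using assms(2,3) by fastforce
qed

lemma no_common_root:
  assumes "0 \<le> n" and polynomial: "is_polynomial (S (n - 1))" "is_polynomial (S n)"
      "is_polynomial (S (n + 1))"
    and squarefree: "rsquarefree (rnum (S n))" and "\<not> is_root (S n) 0"
  shows "\<not> (\<exists>z. is_root (S (n + 1)) z \<and> is_root (S n) z)"
proof
  define B where "B = rnum (S n)"
  assume "\<exists>z. is_root (S (n + 1)) z \<and> is_root (S n) z"
  then obtain z where z_root: "poly (rnum (S (n + 1))) z = 0" and B_root: "poly B z = 0"
    by (auto simp: is_root_def B_def)
  have "z \<noteq> 0"
    using assms(6) B_root by (auto simp: is_root_def B_def)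
  have "to_fract (rnum (S (n + 1)) * rnum (S (n - 1))) = to_fract (umemura_rhs_poly \<mu> B)"
    using recurrence[OF assms(1)] polynomial
    by (simp add: B_def to_fract_rnum_if_is_polynomial flip: umemura_rhs_to_fract)
  hence "poly (umemura_rhs_poly \<mu> B) z = 0"
    using z_root by (metis poly_mult mult_zero_left to_fract_eq_iff)
  hence "poly (pderiv B) z = 0"
    using \<open>z \<noteq> 0\<close> B_root by (simp add: poly_umemura_rhs_poly_at_root)
  thus False
    using squarefree B_root by (simp add: B_def rsquarefree_roots)
qed

end

theorem theorem3p2:
  fixes \<mu> :: complex and S :: "int \<Rightarrow> ratfun" and N :: nat
  assumes init: "S (-1) = 1" "S 0 = 1"
    and recur: "\<And>n. n \<ge> 0 \<Longrightarrow>
      S (n + 1) * S (n - 1) =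
        - rZ * (S n * rderiv (rderiv (S n)) - (rderiv (S n))\<^sup>2)
        - S n * rderiv (S n) + (rZ + rconst \<mu>) * (S n)\<^sup>2"
    and simple: "\<And>n z. n \<ge> -1 \<Longrightarrow> z \<noteq> 0 \<Longrightarrow> is_root (S n) z \<Longrightarrow> order z (rnum (S n)) = 1"
    and nonzero0: "\<And>n. 0 \<le> n \<Longrightarrow> n \<le> int N \<Longrightarrow> \<not> is_root (S n) 0"
  shows "is_polynomial (S (int N + 1))
         \<and> degree (rnum (S (int N + 1))) = (N + 1) * (N + 2) div 2
         \<and> \<not> (\<exists>z. is_root (S (int N + 1)) z \<and> is_root (S (int N)) z)"
proof -
  interpret umemura_sequence \<mu> S
    by unfold_locales (use init recur in \<open>simp_all add: umemura_rhs_def\<close>)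
  have simple_roots: "order z (rnum (S j)) = 1"
    if "0 \<le> j" "j \<le> int N" "poly (rnum (S j)) z = 0" for j z
    using simple[of j z] nonzero0[of j] that by (cases "z = 0") (auto simp: is_root_def)
  have polynomial: "umemura_polynomial j" if "-1 \<le> j" "j \<le> int N + 1" for j
    using umemura_polynomial_upto[OF simple_roots] that by blast
  have "int (2 * degree (rnum (S (int N + 1)))) = int ((N + 1) * (N + 2))"
    using polynomial[of "int N + 1"] unfolding umemura_polynomial_def by (simp add: algebra_simps)
  hence "2 * degree (rnum (S (int N + 1))) = (N + 1) * (N + 2)"
    by (simp only: of_nat_eq_iff)
  moreover have "rsquarefree (rnum (S N))"
    using polynomial[of N] simple_roots[of N]
    by (auto simp: rsquarefree_iff_simple_roots umemura_polynomial_def rnum_def)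
  ultimately show ?thesis
    using polynomial[of "int N + 1"] polynomial[of N] polynomial[of "int N - 1"]
      no_common_root[of N] nonzero0[of N]
    by (simp add: umemura_polynomial_def)
qed

end
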